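(* Let $n\ge 3$, let $G_1$ be the star graph on $n$ nodes with Laplacian $Q_1$, and let $G_1^c$ be its complement, with Laplacian $nI-J-Q_1$ ($J$ the $n\times n$ all-one matrix). For $p\ge0$ let $$Q(p)=\begin{bmatrix} Q_1+npI & -pJ\\ -pJ & nI-J-Q_1+npI\end{bmatrix},$$ with eigenvalues $0=\mu_N(p)\le\mu_{N-1}(p)\le\mu_{N-2}(p)\le\dots\le\mu_1(p)$, $N=2n$. Then for every $p>0$ the eigenvalue $2np$ of $Q(p)$ is not the second smallest eigenvalue, i.e. $\mu_{N-1}(p)\neq 2np$ (so no structural transition of the algebraic connectivity exists); moreover, $\mu_{N-2}(p)=2np$ if and only if $0<p\le \frac1n$, i.e. the transition of the third smallest eigenvalue occurs at $p^*_{N-2}=\frac1n$.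
   Context: $2np$ is an eigenvalue of $Q(p)$ with eigenvector $[u^T,-u^T]^T$, $u$ the all-one vector. $Q(p)$ is the Laplacian of the star coupled to its (disconnected) complement by an $n$-to-$n$ interconnection of weight $p$. *)

theory Defs
  imports "Jordan_Normal_Form.Matrix" "Jordan_Normal_Form.Char_Poly"
begin

definition graph_laplacian :: "nat \<Rightarrow> (nat \<Rightarrow> nat \<Rightarrow> bool) \<Rightarrow> real mat" where
  "graph_laplacian n E = mat n n (\<lambda>(i,j).
      if i = j then real (card {k\<in>{0..<n}. k \<noteq> i \<and> E i k})
      else if E i j then -1 else 0)"

definition star_edge :: "nat \<Rightarrow> nat \<Rightarrow> bool" where
  "star_edge i j \<longleftrightarrow> i \<noteq> j \<and> (i = 0 \<or> j = 0)"

definition star_laplacian :: "nat \<Rightarrow> real mat" where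
  "star_laplacian n = graph_laplacian n star_edge"

definition J_mat :: "nat \<Rightarrow> real mat" where
  "J_mat n = mat n n (\<lambda>_. 1)"

definition Qp :: "nat \<Rightarrow> real \<Rightarrow> real mat" where
  "Qp n p = four_block_mat
     (star_laplacian n + (real n * p) \<cdot>\<^sub>m 1\<^sub>m n)
     ((- p) \<cdot>\<^sub>m J_mat n)
     ((- p) \<cdot>\<^sub>m J_mat n)
     (real n \<cdot>\<^sub>m 1\<^sub>m n - J_mat n - star_laplacian n + (real n * p) \<cdot>\<^sub>m 1\<^sub>m n)"

(* eigenvalues (with algebraic multiplicity) in ascending order: the sorted list of
   roots of the characteristic polynomial (defined when it splits over the reals,
   which is the case for real symmetric matrices) *)
definition eigvals_asc :: "real mat \<Rightarrow> real list" where
  "eigvals_asc A = (THE xs. sorted xs \<and> length xs = dim_row A \<and>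
       char_poly A = (\<Prod>x\<leftarrow>xs. [:- x, 1:]))"

(* mu A k for k = 1..N (N = dimension): mu_N \<le> ... \<le> mu_1 *)
definition mu :: "real mat \<Rightarrow> nat \<Rightarrow> real" where
  "mu A k = eigvals_asc A ! (dim_row A - k)"

end

theory Submission
  imports Defs
begin

(* Q(p) couples the Laplacian A of the star with the Laplacian B = nI - J - A of its complement.
   Both kill the all-one vector u and share an orthogonal eigenbasis of the orthogonal complement
   of u: the hub vector (eigenvalue n for A, 0 for B) and Helmert vectors on the leaves
   (eigenvalues 1 and n - 1).  If A v = a v with v orthogonal to u, then [v; 0] is an eigenvector
   of Q(p) for a + np, and likewise [0; v] for B, while [u; u] and [u; -u] belong to 0 and 2np.
   These 2n vectors are pairwise orthogonal, so they diagonalise Q(p): its spectrum is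
   0, np, 2np, n + np, 1 + np and n - 1 + np, the last two with multiplicity n - 2.  Hence the
   second smallest eigenvalue is np, never 2np, and the third smallest is min (2np) (1 + np),
   which equals 2np exactly when p <= 1/n. *)

lemma scalar_prod_self_pos:
  fixes v :: "real vec"
  assumes "v \<in> carrier_vec n" and "v \<noteq> 0\<^sub>v n"
  shows "v \<bullet> v > 0"
proof -
  obtain i where i: "i < n" "v $ i \<noteq> 0"
    using assms by (metis carrier_vecD eq_vecI index_zero_vec(1) index_zero_vec(2))
  have "v \<bullet> v = (\<Sum>k\<in>{0..<n}. (v $ k)\<^sup>2)"
    using assms(1) by (simp add: scalar_prod_def power2_eq_square)
  also have "\<dots> > 0"
    using i by (intro sum_pos2[of _ i]) auto
  finally show ?thesis .
qed

lemma char_poly_orthogonal_eigenbasis: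
  fixes A :: "real mat"
  assumes A: "A \<in> carrier_mat n n" and len: "length vs = n"
    and eig: "list_all2 (eigenvector A) vs ls"
    and orth: "sorted_wrt (\<lambda>v w. v \<bullet> w = 0) vs"
  shows "char_poly A = (\<Prod>a\<leftarrow>ls. [:- a, 1:])"
proof -
  have len_ls: "length ls = n"
    using eig len by (metis list_all2_lengthD)
  have vs: "vs ! i \<in> carrier_vec n" "vs ! i \<noteq> 0\<^sub>v n" "A *\<^sub>v vs ! i = ls ! i \<cdot>\<^sub>v vs ! i"
    if "i < n" for i
    using list_all2_nthD[OF eig, of i] that len A by (auto simp: eigenvector_def)
  have orth_nth: "vs ! i \<bullet> vs ! j = (if i = j then vs ! i \<bullet> vs ! i else 0)"
    if "i < n" "j < n" for i j
    using orth len that comm_scalar_prod[OF vs(1)[of i] vs(1)[of j]]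
    by (cases i j rule: linorder_cases) (auto simp: sorted_wrt_iff_nth_less)
  define P where "P = mat_of_cols n vs"
  \<comment> \<open>orthogonality makes the rescaled transpose of \<open>P\<close> its inverse\<close>
  define P' where "P' = mat n n (\<lambda>(i, j). vs ! i $ j / (vs ! i \<bullet> vs ! i))"
  define D where "D = mat_diag n (\<lambda>i. ls ! i)"
  have P: "P \<in> carrier_mat n n" and P': "P' \<in> carrier_mat n n" and D: "D \<in> carrier_mat n n"
    using mat_of_cols_carrier(1)[of n vs] by (simp_all add: P_def P'_def D_def len)
  have "P' * P = 1\<^sub>m n"
  proof (rule eq_matI)
    fix i j assume "i < dim_row (1\<^sub>m n :: real mat)" "j < dim_col (1\<^sub>m n :: real mat)"
    then have ij: "i < n" "j < n" by auto
    have "(P' * P) $$ (i, j) = (vs ! i \<bullet> vs ! j) / (vs ! i \<bullet> vs ! i)"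
      using ij vs(1)[of i] vs(1)[of j] len
      by (simp add: P_def P'_def scalar_prod_def sum_divide_distrib)
    then show "(P' * P) $$ (i, j) = 1\<^sub>m n $$ (i, j)"
      using ij orth_nth[OF ij] scalar_prod_self_pos[OF vs(1,2), of i] by (cases "i = j") auto
  qed (use P P' in auto)
  then have PP': "P * P' = 1\<^sub>m n"
    by (rule mat_mult_left_right_inverse[OF P' P])
  have "A * P = P * D"
  proof (rule eq_matI)
    fix i j assume "i < dim_row (P * D)" "j < dim_col (P * D)"
    then have ij: "i < n" "j < n" using P D by auto
    have "(A * P) $$ (i, j) = (A *\<^sub>v vs ! j) $ i"
      using ij A len vs(1)[of j] by (simp add: P_def)
    moreover have "(P * D) $$ (i, j) = P $$ (i, j) * ls ! j"
      using ij unfolding D_def mat_diag_mult_right[OF P] by simp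
    ultimately show "(A * P) $$ (i, j) = (P * D) $$ (i, j)"
      using ij vs(1,3)[of j] len by (simp add: P_def mat_of_cols_index)
  qed (use A P D in auto)
  then have "A = P * D * P'"
    using A P P' PP' by (metis assoc_mult_mat right_mult_one_mat)
  then have "similar_mat A D"
    using A P P' D PP' \<open>P' * P = 1\<^sub>m n\<close>
    unfolding similar_mat_def similar_mat_wit_def Let_def by (intro exI[of _ P] exI[of _ P']) auto
  then have "char_poly A = char_poly D"
    by (rule char_poly_similar)
  also have "\<dots> = (\<Prod>a\<leftarrow>diag_mat D. [:- a, 1:])"
    by (rule char_poly_upper_triangular[OF D]) (simp add: D_def mat_diag_def upper_triangular_def)
  also have "diag_mat D = ls"
    using len_ls by (simp add: D_def mat_diag_def diag_mat_def list_eq_iff_nth_eq)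
  finally show ?thesis .
qed

lemma order_linear_factors: "order x (\<Prod>y\<leftarrow>ys. [:- y, 1:]) = count (mset ys) (x :: 'a :: idom)"
proof -
  have "order x (\<Prod>y\<leftarrow>ys. [:- y, 1:]) = (\<Sum>y\<leftarrow>ys. order x [:- y, 1:])"
    by (subst order_prod_list) (auto simp: comp_def)
  also have "\<dots> = count (mset ys) x"
    by (induction ys) (auto simp: order_linear')
  finally show ?thesis .
qed

lemma eigvals_asc_eqI:
  assumes char_poly: "char_poly A = (\<Prod>x\<leftarrow>xs. [:- x, 1:])" and len: "length xs = dim_row A"
  shows "eigvals_asc A = sort xs"
  unfolding eigvals_asc_def
proof (rule the_equality)
  have "(\<Prod>x\<leftarrow>sort xs. [:- x, 1:]) = (\<Prod>x\<leftarrow>xs. [:- x, 1:] :: real poly)"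
    by (simp only: prod_mset_prod_list[symmetric] mset_map mset_sort)
  then show "sorted (sort xs) \<and> length (sort xs) = dim_row A \<and> char_poly A = (\<Prod>x\<leftarrow>sort xs. [:- x, 1:])"
    using char_poly len by simp
next
  fix ys assume ys: "sorted ys \<and> length ys = dim_row A \<and> char_poly A = (\<Prod>x\<leftarrow>ys. [:- x, 1:])"
  have "mset ys = mset xs"
  proof (rule multiset_eqI)
    fix x
    show "count (mset ys) x = count (mset xs) x"
      using ys char_poly order_linear_factors[of x] by metis
  qed
  then show "ys = sort xs"
    using ys properties_for_sort by metis
qed

definition ones_vec :: "nat \<Rightarrow> real vec" where
  "ones_vec n = vec n (\<lambda>_. 1)"

lemma ones_vec_carrier [simp]: "ones_vec n \<in> carrier_vec n"
  and dim_ones_vec [simp]: "dim_vec (ones_vec n) = n"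
  and index_ones_vec [simp]: "i < n \<Longrightarrow> ones_vec n $ i = 1"
  by (simp_all add: ones_vec_def)

lemma J_mat_carrier [simp]: "J_mat n \<in> carrier_mat n n"
  by (simp add: J_mat_def)

lemma smult_one_mat_mult_vec:
  "v \<in> carrier_vec n \<Longrightarrow> (c \<cdot>\<^sub>m 1\<^sub>m n) *\<^sub>v v = c \<cdot>\<^sub>v (v :: 'a :: comm_ring_1 vec)"
  by (intro eq_vecI) (auto simp: scalar_prod_def if_distrib if_distribR cong: if_cong)

lemma smult_J_mat_mult_vec:
  "v \<in> carrier_vec n \<Longrightarrow> (c \<cdot>\<^sub>m J_mat n) *\<^sub>v v = (c * (ones_vec n \<bullet> v)) \<cdot>\<^sub>v ones_vec n"
  by (intro eq_vecI) (auto simp: J_mat_def ones_vec_def scalar_prod_def sum_distrib_left)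

lemma J_mat_mult_vec:
  "v \<in> carrier_vec n \<Longrightarrow> J_mat n *\<^sub>v v = (ones_vec n \<bullet> v) \<cdot>\<^sub>v ones_vec n"
  by (intro eq_vecI) (auto simp: J_mat_def ones_vec_def scalar_prod_def)

lemma ones_vec_nonzero: "n > 0 \<Longrightarrow> ones_vec n \<noteq> 0\<^sub>v n"
  by (metis index_ones_vec index_zero_vec(1) zero_neq_one)

lemma ones_vec_scalar_prod_self: "ones_vec n \<bullet> ones_vec n = real n"
  by (simp add: ones_vec_def scalar_prod_def)

lemma append_vec_eq_zero_iff:
  assumes "v \<in> carrier_vec n" and "w \<in> carrier_vec m"
  shows "v @\<^sub>v w = 0\<^sub>v (n + m) \<longleftrightarrow> v = 0\<^sub>v n \<and> w = 0\<^sub>v m"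
proof -
  have "0\<^sub>v (n + m) = 0\<^sub>v n @\<^sub>v (0\<^sub>v m :: 'a vec)"
    by (intro eq_vecI) auto
  then show ?thesis
    using assms by simp
qed

definition coupled_laplacian :: "nat \<Rightarrow> real mat \<Rightarrow> real mat \<Rightarrow> real \<Rightarrow> real mat" where
  "coupled_laplacian n A B p = four_block_mat
     (A + (real n * p) \<cdot>\<^sub>m 1\<^sub>m n) ((- p) \<cdot>\<^sub>m J_mat n)
     ((- p) \<cdot>\<^sub>m J_mat n) (B + (real n * p) \<cdot>\<^sub>m 1\<^sub>m n)"

lemma coupled_laplacian_mult_vec:
  assumes "A \<in> carrier_mat n n" "B \<in> carrier_mat n n" "v \<in> carrier_vec n" "w \<in> carrier_vec n"
  shows "coupled_laplacian n A B p *\<^sub>v (v @\<^sub>v w) =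
    (A *\<^sub>v v + (real n * p) \<cdot>\<^sub>v v + (- p * (ones_vec n \<bullet> w)) \<cdot>\<^sub>v ones_vec n) @\<^sub>v
    (B *\<^sub>v w + (real n * p) \<cdot>\<^sub>v w + (- p * (ones_vec n \<bullet> v)) \<cdot>\<^sub>v ones_vec n)"
  using assms unfolding coupled_laplacian_def
  by (subst four_block_mat_mult_vec[of _ n n])
     (auto simp: add_mult_distrib_mat_vec[of _ n n] smult_one_mat_mult_vec smult_J_mat_mult_vec comm_add_vec[of _ n])

lemma coupled_laplacian_carrier:
  "A \<in> carrier_mat n n \<Longrightarrow> B \<in> carrier_mat n n \<Longrightarrow> coupled_laplacian n A B p \<in> carrier_mat (n + n) (n + n)"
  by (simp add: coupled_laplacian_def)

context
  fixes n :: nat and A B :: "real mat" and p :: real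
  assumes A: "A \<in> carrier_mat n n" and B: "B \<in> carrier_mat n n"
begin

lemma coupled_laplacian_eigenvector_left:
  assumes "eigenvector A v a" and "ones_vec n \<bullet> v = 0"
  shows "eigenvector (coupled_laplacian n A B p) (v @\<^sub>v 0\<^sub>v n) (a + real n * p)"
proof -
  have v: "v \<in> carrier_vec n" "v \<noteq> 0\<^sub>v n" "A *\<^sub>v v = a \<cdot>\<^sub>v v"
    using assms(1) A by (auto simp: eigenvector_def)
  have "coupled_laplacian n A B p *\<^sub>v (v @\<^sub>v 0\<^sub>v n) = (a + real n * p) \<cdot>\<^sub>v (v @\<^sub>v 0\<^sub>v n)"
    unfolding coupled_laplacian_mult_vec[OF A B v(1) zero_carrier_vec] v(3)
    using v(1) B by (intro eq_vecI) (auto simp: assms(2) ring_distribs)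
  then show ?thesis
    using v A B append_vec_eq_zero_iff[OF v(1), of "0\<^sub>v n" n]
    by (auto simp: eigenvector_def coupled_laplacian_def)
qed

lemma coupled_laplacian_eigenvector_right:
  assumes "eigenvector B w b" and "ones_vec n \<bullet> w = 0"
  shows "eigenvector (coupled_laplacian n A B p) (0\<^sub>v n @\<^sub>v w) (b + real n * p)"
proof -
  have w: "w \<in> carrier_vec n" "w \<noteq> 0\<^sub>v n" "B *\<^sub>v w = b \<cdot>\<^sub>v w"
    using assms(1) B by (auto simp: eigenvector_def)
  have "coupled_laplacian n A B p *\<^sub>v (0\<^sub>v n @\<^sub>v w) = (b + real n * p) \<cdot>\<^sub>v (0\<^sub>v n @\<^sub>v w)"
    unfolding coupled_laplacian_mult_vec[OF A B zero_carrier_vec w(1)] w(3)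
    using w(1) A by (intro eq_vecI) (auto simp: assms(2) ring_distribs)
  then show ?thesis
    using w A B append_vec_eq_zero_iff[OF zero_carrier_vec w(1)]
    by (auto simp: eigenvector_def coupled_laplacian_def)
qed

context
  assumes n_pos: "n > 0" and A_ones: "A *\<^sub>v ones_vec n = 0\<^sub>v n" and B_ones: "B *\<^sub>v ones_vec n = 0\<^sub>v n"
begin

lemma coupled_laplacian_eigenvector_ones:
  "eigenvector (coupled_laplacian n A B p) (ones_vec n @\<^sub>v ones_vec n) 0"
proof -
  have "coupled_laplacian n A B p *\<^sub>v (ones_vec n @\<^sub>v ones_vec n) = 0 \<cdot>\<^sub>v (ones_vec n @\<^sub>v ones_vec n)"
    unfolding coupled_laplacian_mult_vec[OF A B ones_vec_carrier ones_vec_carrier] A_ones B_ones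
    by (intro eq_vecI) (auto simp: ones_vec_scalar_prod_self)
  moreover have "ones_vec n \<noteq> 0\<^sub>v n"
    using n_pos by (rule ones_vec_nonzero)
  ultimately show ?thesis
    using A B append_vec_eq_zero_iff[OF ones_vec_carrier ones_vec_carrier, of n n]
    by (auto simp: eigenvector_def coupled_laplacian_def)
qed

lemma coupled_laplacian_eigenvector_ones_neg:
  "eigenvector (coupled_laplacian n A B p) (ones_vec n @\<^sub>v - ones_vec n) (2 * real n * p)"
proof -
  have "coupled_laplacian n A B p *\<^sub>v (ones_vec n @\<^sub>v - ones_vec n) = (2 * real n * p) \<cdot>\<^sub>v (ones_vec n @\<^sub>v - ones_vec n)"
    unfolding coupled_laplacian_mult_vec[OF A B ones_vec_carrier uminus_carrier_vec[THEN iffD2, OF ones_vec_carrier]]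
    using A_ones B_ones B index_mult_mat_vec[of _ B "ones_vec n"]
    by (intro eq_vecI) (auto simp: ones_vec_scalar_prod_self)
  moreover have "ones_vec n \<noteq> 0\<^sub>v n"
    using n_pos by (rule ones_vec_nonzero)
  ultimately show ?thesis
    using A B append_vec_eq_zero_iff[OF ones_vec_carrier uminus_carrier_vec[THEN iffD2, OF ones_vec_carrier], of n n]
    by (auto simp: eigenvector_def coupled_laplacian_def)
qed

lemma char_poly_coupled_laplacian:
  assumes len: "length vs = n - 1"
    and eig_A: "list_all2 (eigenvector A) vs as" and eig_B: "list_all2 (eigenvector B) vs bs"
    and orth: "sorted_wrt (\<lambda>v w. v \<bullet> w = 0) (ones_vec n # vs)"
  shows "char_poly (coupled_laplacian n A B p) =
    (\<Prod>x\<leftarrow>[0, 2 * real n * p] @ map (\<lambda>a. a + real n * p) as @ map (\<lambda>b. b + real n * p) bs.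
      [:- x, 1:])"
proof -
  have vs: "v \<in> carrier_vec n" "ones_vec n \<bullet> v = 0" if "v \<in> set vs" for v
    using that orth eig_A A by (auto simp: list_all2_conv_all_nth in_set_conv_nth eigenvector_def)
  have neg_ones_orth: "- ones_vec n \<bullet> v = 0" if "v \<in> set vs" for v
    using vs[OF that] by simp
  have len_as: "length as = n - 1" and len_bs: "length bs = n - 1"
    using eig_A eig_B len by (auto dest: list_all2_lengthD)
  let ?M = "coupled_laplacian n A B p"
  let ?ws = "[ones_vec n @\<^sub>v ones_vec n, ones_vec n @\<^sub>v - ones_vec n] @
     map (\<lambda>v. v @\<^sub>v 0\<^sub>v n) vs @ map (\<lambda>v. 0\<^sub>v n @\<^sub>v v) vs"
  have "list_all2 (\<lambda>v a. eigenvector ?M (v @\<^sub>v 0\<^sub>v n) (a + real n * p)) vs as"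
    using eig_A vs(2) unfolding list_all2_conv_all_nth
    by (auto intro: coupled_laplacian_eigenvector_left)
  moreover have "list_all2 (\<lambda>v b. eigenvector ?M (0\<^sub>v n @\<^sub>v v) (b + real n * p)) vs bs"
    using eig_B vs(2) unfolding list_all2_conv_all_nth
    by (auto intro: coupled_laplacian_eigenvector_right)
  ultimately have eig: "list_all2 (eigenvector ?M) ?ws
      ([0, 2 * real n * p] @ map (\<lambda>a. a + real n * p) as @ map (\<lambda>b. b + real n * p) bs)"
    by (auto intro!: list_all2_appendI simp: list_all2_map1 list_all2_map2
        coupled_laplacian_eigenvector_ones coupled_laplacian_eigenvector_ones_neg)
  have "sorted_wrt (\<lambda>v w. v \<bullet> w = 0) ?ws"
    using orth vs neg_ones_orth
    by (auto simp: sorted_wrt_append sorted_wrt_map scalar_prod_append[of _ n _ n] ones_vec_scalar_prod_self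
        elim!: sorted_wrt_mono_rel[rotated])
  moreover have "length ?ws = n + n"
    using len n_pos by simp
  ultimately show ?thesis
    using char_poly_orthogonal_eigenbasis[OF coupled_laplacian_carrier[OF A B] _ eig] by simp
qed

end

end

lemma graph_laplacian_carrier [simp]: "graph_laplacian n E \<in> carrier_mat n n"
  by (simp add: graph_laplacian_def)

lemma graph_laplacian_mult_ones: "graph_laplacian n E *\<^sub>v ones_vec n = 0\<^sub>v n"
proof (rule eq_vecI)
  fix i assume "i < dim_vec (0\<^sub>v n :: real vec)"
  then have i: "i < n" by simp
  let ?N = "{k \<in> {0..<n}. k \<noteq> i \<and> E i k}"
  have "(graph_laplacian n E *\<^sub>v ones_vec n) $ i =
      (\<Sum>j\<in>{0..<n}. if i = j then real (card ?N) else if E i j then -1 else 0)"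
    using i by (simp add: graph_laplacian_def scalar_prod_def)
  also have "\<dots> = real (card ?N) + (\<Sum>j\<in>{0..<n} - {i}. if E i j then -1 else 0)"
    using i by (subst sum.remove[of _ i]) (auto intro!: sum.cong)
  also have "(\<Sum>j\<in>{0..<n} - {i}. if E i j then -1 else 0 :: real) = - real (card ?N)"
    by (subst sum.If_cases) (auto intro!: arg_cong[where f = card])
  finally show "(graph_laplacian n E *\<^sub>v ones_vec n) $ i = 0\<^sub>v n $ i"
    using i by simp
qed (simp add: carrier_matD[OF graph_laplacian_carrier])

lemma star_laplacian_carrier [simp]: "star_laplacian n \<in> carrier_mat n n"
  by (simp add: star_laplacian_def)

lemma star_laplacian_index:
  assumes "i < n" and "j < n"
  shows "star_laplacian n $$ (i, j) =
    (if i = j then (if i = 0 then real n - 1 else 1) else if i = 0 \<or> j = 0 then -1 else 0)"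
proof -
  have "{k \<in> {0..<n}. k \<noteq> i \<and> star_edge i k} = (if i = 0 then {1..<n} else {0})"
    using assms by (auto simp: star_edge_def)
  then have deg: "real (card {k \<in> {0..<n}. k \<noteq> i \<and> star_edge i k}) = (if i = 0 then real n - 1 else 1)"
    using assms by simp
  show ?thesis
    unfolding star_laplacian_def graph_laplacian_def index_mat(1)[OF assms] split deg
    by (simp add: star_edge_def)
qed

lemma star_laplacian_mult_vec:
  assumes v: "v \<in> carrier_vec n" and sum_v: "ones_vec n \<bullet> v = 0"
  shows "star_laplacian n *\<^sub>v v = vec n (\<lambda>i. if i = 0 then real n * v $ 0 else v $ i - v $ 0)"
proof (rule eq_vecI)
  fix i assume "i < dim_vec (vec n (\<lambda>i. if i = 0 then real n * v $ 0 else v $ i - v $ 0))"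
  then have i: "i < n" by simp
  have row: "star_laplacian n $$ (i, j) * v $ j =
      (if j = i then (if i = 0 then real n * v $ 0 else v $ i) else 0) - (if i = 0 then v $ j else if j = 0 then v $ 0 else 0)"
    if "j < n" for j
    using i that by (auto simp: star_laplacian_index algebra_simps)
  have sum_zero: "(\<Sum>j\<in>{0..<n}. v $ j) = 0"
    using sum_v v by (simp add: scalar_prod_def)
  have "(star_laplacian n *\<^sub>v v) $ i = (\<Sum>j\<in>{0..<n}. star_laplacian n $$ (i, j) * v $ j)"
    using i v carrier_matD[OF star_laplacian_carrier] by (simp add: scalar_prod_def)
  also have "\<dots> = (\<Sum>j\<in>{0..<n}. (if j = i then (if i = 0 then real n * v $ 0 else v $ i) else 0)
      - (if i = 0 then v $ j else if j = 0 then v $ 0 else 0))"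
    by (intro sum.cong) (auto simp: row)
  finally show "(star_laplacian n *\<^sub>v v) $ i = vec n (\<lambda>i. if i = 0 then real n * v $ 0 else v $ i - v $ 0) $ i"
    using i sum_zero by (simp add: sum_subtractf)
qed (use v in \<open>simp add: carrier_matD[OF star_laplacian_carrier]\<close>)

definition star_hub_vec :: "nat \<Rightarrow> real vec" where
  "star_hub_vec n = vec n (\<lambda>i. if i = 0 then real n - 1 else -1)"

(* e_1 + ... + e_k - k e_(k+1): the Helmert basis of the zero-sum vectors on the leaves *)
definition helmert_vec :: "nat \<Rightarrow> nat \<Rightarrow> real vec" where
  "helmert_vec n k = vec n (\<lambda>i. if 1 \<le> i \<and> i \<le> k then 1 else if i = k + 1 then - real k else 0)"

lemma star_hub_vec_carrier [simp]: "star_hub_vec n \<in> carrier_vec n"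
  by (simp add: star_hub_vec_def)

lemma helmert_vec_carrier [simp]: "helmert_vec n k \<in> carrier_vec n"
  by (simp add: helmert_vec_def)

lemma helmert_vec_hub_entry: "n > 0 \<Longrightarrow> helmert_vec n k $ 0 = 0"
  by (simp add: helmert_vec_def)

lemma ones_vec_scalar_prod_helmert_vec:
  assumes "k + 1 < n"
  shows "ones_vec n \<bullet> helmert_vec n k = 0"
proof -
  have "{i \<in> {0..<n}. i \<in> {1..k}} = {1..k}"
    using assms by auto
  then have leaves: "(\<Sum>i\<in>{0..<n}. if i \<in> {1..k} then 1 else 0 :: real) = real k"
    using sum.inter_filter[of "{0..<n}" "\<lambda>_. 1 :: real" "\<lambda>i. i \<in> {1..k}"] by simp
  have "ones_vec n \<bullet> helmert_vec n k =
      (\<Sum>i\<in>{0..<n}. (if i \<in> {1..k} then 1 else 0) + (if i = k + 1 then - real k else 0))"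
    by (auto simp: scalar_prod_def helmert_vec_def intro!: sum.cong)
  also have "\<dots> = 0"
    using assms by (simp only: sum.distrib leaves) simp
  finally show ?thesis .
qed

lemma helmert_vec_scalar_prod:
  assumes "j < k" and "k + 1 < n"
  shows "helmert_vec n j \<bullet> helmert_vec n k = 0"
proof -
  \<comment> \<open>the later vector is 1 on the whole support of the earlier one\<close>
  have "helmert_vec n j \<bullet> helmert_vec n k = ones_vec n \<bullet> helmert_vec n j"
    using assms by (auto simp: scalar_prod_def helmert_vec_def intro!: sum.cong)
  then show ?thesis
    using assms by (simp add: ones_vec_scalar_prod_helmert_vec)
qed

lemma star_hub_vec_scalar_prod:
  assumes "v \<in> carrier_vec n" and "n > 0"
  shows "star_hub_vec n \<bullet> v = real n * v $ 0 - ones_vec n \<bullet> v"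
proof -
  have "star_hub_vec n \<bullet> v = (\<Sum>i\<in>{0..<n}. (if i = 0 then real n * v $ 0 else 0) - v $ i)"
    using assms by (auto simp: scalar_prod_def star_hub_vec_def algebra_simps intro!: sum.cong)
  then show ?thesis
    using assms by (simp add: sum_subtractf scalar_prod_def)
qed

lemma ones_vec_scalar_prod_star_hub_vec:
  assumes "n > 0"
  shows "ones_vec n \<bullet> star_hub_vec n = 0"
proof -
  have "ones_vec n \<bullet> star_hub_vec n = star_hub_vec n \<bullet> ones_vec n"
    by (rule comm_scalar_prod[of _ n]) simp_all
  then show ?thesis
    using assms by (simp add: star_hub_vec_scalar_prod ones_vec_scalar_prod_self)
qed

lemma star_laplacian_eigenvector_hub:
  assumes "n \<ge> 2"
  shows "eigenvector (star_laplacian n) (star_hub_vec n) (real n)"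
proof -
  have sum: "ones_vec n \<bullet> star_hub_vec n = 0"
    using assms by (simp add: ones_vec_scalar_prod_star_hub_vec)
  have "star_hub_vec n $ 1 \<noteq> 0\<^sub>v n $ 1"
    using assms by (simp add: star_hub_vec_def)
  then have "star_hub_vec n \<noteq> 0\<^sub>v n"
    by metis
  then show ?thesis
    using assms unfolding eigenvector_def star_laplacian_mult_vec[OF star_hub_vec_carrier sum]
    by (auto simp: star_hub_vec_def carrier_matD[OF star_laplacian_carrier] algebra_simps)
qed

lemma star_laplacian_eigenvector_helmert:
  assumes "1 \<le> k" and "k + 1 < n"
  shows "eigenvector (star_laplacian n) (helmert_vec n k) 1"
proof -
  have "helmert_vec n k $ 1 \<noteq> 0\<^sub>v n $ 1"
    using assms by (simp add: helmert_vec_def)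
  then have "helmert_vec n k \<noteq> 0\<^sub>v n"
    by metis
  then show ?thesis
    using assms
    unfolding eigenvector_def star_laplacian_mult_vec[OF helmert_vec_carrier ones_vec_scalar_prod_helmert_vec[OF assms(2)]]
    by (auto simp: helmert_vec_def carrier_matD[OF star_laplacian_carrier])
qed

lemma complement_laplacian_mult_vec:
  assumes "L \<in> carrier_mat n n" and "v \<in> carrier_vec n"
  shows "(real n \<cdot>\<^sub>m 1\<^sub>m n - J_mat n - L) *\<^sub>v v = real n \<cdot>\<^sub>v v - (ones_vec n \<bullet> v) \<cdot>\<^sub>v ones_vec n - L *\<^sub>v v"
proof -
  have "(real n \<cdot>\<^sub>m 1\<^sub>m n - J_mat n - L) *\<^sub>v v = (real n \<cdot>\<^sub>m 1\<^sub>m n - J_mat n) *\<^sub>v v - L *\<^sub>v v"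
    using assms by (intro minus_mult_distrib_mat_vec) (auto intro: minus_carrier_mat)
  also have "(real n \<cdot>\<^sub>m 1\<^sub>m n - J_mat n) *\<^sub>v v = (real n \<cdot>\<^sub>m 1\<^sub>m n) *\<^sub>v v - J_mat n *\<^sub>v v"
    using assms by (intro minus_mult_distrib_mat_vec) auto
  finally show ?thesis
    using assms by (simp add: smult_one_mat_mult_vec J_mat_mult_vec)
qed

lemma complement_laplacian_mult_ones:
  assumes "L \<in> carrier_mat n n" and "L *\<^sub>v ones_vec n = 0\<^sub>v n"
  shows "(real n \<cdot>\<^sub>m 1\<^sub>m n - J_mat n - L) *\<^sub>v ones_vec n = 0\<^sub>v n"
  using assms by (auto simp: complement_laplacian_mult_vec ones_vec_scalar_prod_self)

lemma complement_laplacian_eigenvectors: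
  assumes L: "L \<in> carrier_mat n n" and eig: "list_all2 (eigenvector L) vs as"
    and sum_zero: "\<And>v. v \<in> set vs \<Longrightarrow> ones_vec n \<bullet> v = 0"
  shows "list_all2 (eigenvector (real n \<cdot>\<^sub>m 1\<^sub>m n - J_mat n - L)) vs (map (\<lambda>a. real n - a) as)"
  unfolding list_all2_map2
proof (rule list_all2_all_nthI)
  show "length vs = length as"
    using eig by (rule list_all2_lengthD)
  fix i assume i: "i < length vs"
  have v: "vs ! i \<in> carrier_vec n" "vs ! i \<noteq> 0\<^sub>v n" "L *\<^sub>v vs ! i = as ! i \<cdot>\<^sub>v vs ! i"
    using list_all2_nthD[OF eig i] L by (auto simp: eigenvector_def)
  have "(real n \<cdot>\<^sub>m 1\<^sub>m n - J_mat n - L) *\<^sub>v vs ! i = (real n - as ! i) \<cdot>\<^sub>v vs ! i"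
    unfolding complement_laplacian_mult_vec[OF L v(1)] v(3) sum_zero[OF nth_mem[OF i]]
    using v(1) by (intro eq_vecI) (auto simp: algebra_simps)
  then show "eigenvector (real n \<cdot>\<^sub>m 1\<^sub>m n - J_mat n - L) (vs ! i) (real n - as ! i)"
    using v L by (simp add: eigenvector_def)
qed

lemma Qp_eq_coupled_laplacian:
  "Qp n p = coupled_laplacian n (star_laplacian n) (real n \<cdot>\<^sub>m 1\<^sub>m n - J_mat n - star_laplacian n) p"
  by (simp add: Qp_def coupled_laplacian_def)

lemma char_poly_Qp:
  assumes n: "n \<ge> 2"
  shows "char_poly (Qp n p) = (\<Prod>x\<leftarrow>[0, 2 * real n * p, real n + real n * p] @
      replicate (n - 2) (1 + real n * p) @ [real n * p] @ replicate (n - 2) (real n - 1 + real n * p).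
    [:- x, 1:])"
proof -
  let ?L = "star_laplacian n"
  let ?vs = "star_hub_vec n # map (helmert_vec n) [1..<n - 1]"
  let ?as = "real n # replicate (n - 2) 1"
  have "list_all2 (eigenvector ?L) (map (helmert_vec n) [1..<n - 1]) (replicate (n - 2) 1)"
    using n by (auto simp: list_all2_conv_all_nth intro!: star_laplacian_eigenvector_helmert)
  then have eig: "list_all2 (eigenvector ?L) ?vs ?as"
    using star_laplacian_eigenvector_hub[OF n] by simp
  have "sorted_wrt (\<lambda>v w. v \<bullet> w = 0) (map (helmert_vec n) [1..<n - 1])"
    by (auto simp: sorted_wrt_map sorted_wrt_iff_nth_less helmert_vec_scalar_prod)
  then have orth: "sorted_wrt (\<lambda>v w. v \<bullet> w = 0) (ones_vec n # ?vs)"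
    using n by (auto simp: star_hub_vec_scalar_prod ones_vec_scalar_prod_star_hub_vec
        ones_vec_scalar_prod_helmert_vec helmert_vec_hub_entry)
  have ones_orth: "ones_vec n \<bullet> v = 0" if "v \<in> set ?vs" for v
    using orth that by (simp only: sorted_wrt.simps(2))
  have eig_compl: "list_all2 (eigenvector (real n \<cdot>\<^sub>m 1\<^sub>m n - J_mat n - ?L)) ?vs (map (\<lambda>a. real n - a) ?as)"
    by (rule complement_laplacian_eigenvectors[OF star_laplacian_carrier eig ones_orth])
  have L_ones: "?L *\<^sub>v ones_vec n = 0\<^sub>v n"
    unfolding star_laplacian_def by (rule graph_laplacian_mult_ones)
  have "char_poly (Qp n p) = (\<Prod>x\<leftarrow>[0, 2 * real n * p] @ map (\<lambda>a. a + real n * p) ?as @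
      map (\<lambda>b. b + real n * p) (map (\<lambda>a. real n - a) ?as). [:- x, 1:])"
    unfolding Qp_eq_coupled_laplacian
    using n L_ones complement_laplacian_mult_ones[OF star_laplacian_carrier L_ones]
    by (intro char_poly_coupled_laplacian[OF star_laplacian_carrier _ _ _ _ _ eig eig_compl orth])
       (auto intro: minus_carrier_mat)
  then show ?thesis
    using n by simp
qed

lemma dim_row_Qp [simp]: "dim_row (Qp n p) = 2 * n"
  by (simp add: Qp_def carrier_matD[OF star_laplacian_carrier])

lemma eigvals_asc_Qp:
  assumes n: "n \<ge> 2" and p: "p \<ge> 0"
  shows "eigvals_asc (Qp n p) = 0 # real n * p # insort (2 * real n * p)
    (replicate (n - 2) (1 + real n * p) @ replicate (n - 2) (real n - 1 + real n * p) @ [real n + real n * p])"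
    (is "_ = ?ys")
proof -
  let ?xs = "[0, 2 * real n * p, real n + real n * p] @
      replicate (n - 2) (1 + real n * p) @ [real n * p] @ replicate (n - 2) (real n - 1 + real n * p)"
  have "eigvals_asc (Qp n p) = sort ?xs"
    using n by (intro eigvals_asc_eqI char_poly_Qp) auto
  also have "sort ?xs = ?ys"
  proof (rule properties_for_sort)
    show "mset ?ys = mset ?xs"
      by simp
    show "sorted ?ys"
      using n p by (auto simp: sorted_append sorted_insort set_insort_key)
  qed
  finally show ?thesis .
qed

theorem mainTheorem7:
  fixes n :: nat
  assumes "n \<ge> 3"
  shows "(\<forall>p::real. p > 0 \<longrightarrow> mu (Qp n p) (2*n - 1) \<noteq> 2 * real n * p)
       \<and> (\<forall>p::real. p > 0 \<longrightarrow> (mu (Qp n p) (2*n - 2) = 2 * real n * p \<longleftrightarrow> p \<le> 1 / real n))"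
proof (intro conjI allI impI)
  fix p :: real assume p: "p > 0"
  have "n - 2 = Suc (n - 3)"
    using assms by simp
  then have spectrum: "eigvals_asc (Qp n p) = 0 # real n * p # insort (2 * real n * p)
      ((1 + real n * p) # replicate (n - 3) (1 + real n * p) @
        replicate (n - 2) (real n - 1 + real n * p) @ [real n + real n * p])"
    using eigvals_asc_Qp[of n p] assms p by simp
  have "2 * n - (2 * n - 1) = 1" and "2 * n - (2 * n - 2) = 2"
    using assms by simp_all
  then have mu_2n_1: "mu (Qp n p) (2 * n - 1) = real n * p"
    and mu_2n_2: "mu (Qp n p) (2 * n - 2) = min (2 * real n * p) (1 + real n * p)"
    unfolding mu_def dim_row_Qp spectrum by (simp_all add: min_def)
  show "mu (Qp n p) (2 * n - 1) \<noteq> 2 * real n * p"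
    unfolding mu_2n_1 using assms p by simp
  show "mu (Qp n p) (2 * n - 2) = 2 * real n * p \<longleftrightarrow> p \<le> 1 / real n"
    unfolding mu_2n_2 using assms by (auto simp: min_def field_simps)
qed

end
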